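(* (a) For every $D$-norm $\|\cdot\|_D$ there is a function $g:[0,1]^2\to[0,\infty)$ such that (i) $g(s,\cdot)$ is continuous on $[0,1]$ for every $s\in[0,1]$, (ii) $g(\cdot,t)$ is a Lebesgue probability density on $[0,1]$ for every $t\in[0,1]$, (iii) $\int_0^1\sup_{t\in[0,1]} g(s,t)\,ds<\infty$, and \[ \|f\|_D=\int_{[0,1]}\sup_{t\in[0,1]}\big(|f(t)|\,g(s,t)\big)\,ds,\qquad f\in E[0,1]; \] in particular $\|\cdot\|_D$ is generated by the process $(g(U,t))_{t\in[0,1]}$, where $U$ is uniformly distributed on $[0,1]$. (b) Conversely, if $g:[0,1]^2\to[0,\infty)$ satisfies (i), (ii) and (iii), then $f\mapsto\int_{[0,1]}\sup_{t\in[0,1]}\big(|f(t)|\,g(s,t)\big)\,ds$, $f\in E[0,1]$, is a $D$-norm.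
   Context: $E[0,1]$ denotes the set of all bounded real-valued functions on $[0,1]$ that have only finitely many discontinuities. $\bar C^+[0,1]$ denotes the set of non-negative continuous functions on $[0,1]$. A generator is a stochastic process $\mathbf{Z}=(Z_t)_{t\in[0,1]}$ with sample paths in $\bar C^+[0,1]$ such that $E(Z_t)=1$ for every $t\in[0,1]$ and $E(\sup_{t\in[0,1]}Z_t)<\infty$. A $D$-norm is a function on $E[0,1]$ of the form $\|f\|_D=E\big(\sup_{t\in[0,1]}|f(t)Z_t|\big)$, $f\in E[0,1]$, for some generator $\mathbf{Z}$; $\mathbf{Z}$ is then said to generate this $D$-norm. A function $g$ satisfying (i)–(iii) is called a family of spectral densities $(g(\cdot,t))_{t\in[0,1]}$. *)

theory Defs
  imports "HOL-Probability.Probability"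
begin

definition E01 :: "(real \<Rightarrow> real) set" where
  "E01 = {f. bounded (f ` {0..1}) \<and>
             finite {t \<in> {0..1}. \<not> continuous (at t within {0..1}) f}}"

definition generator :: "'a measure \<Rightarrow> ('a \<Rightarrow> real \<Rightarrow> real) \<Rightarrow> bool" where
  "generator M Z \<longleftrightarrow> prob_space M \<and>
     (\<forall>t\<in>{0..1}. (\<lambda>\<omega>. Z \<omega> t) \<in> borel_measurable M) \<and>
     (\<forall>\<omega>\<in>space M. continuous_on {0..1} (Z \<omega>) \<and> (\<forall>t\<in>{0..1}. Z \<omega> t \<ge> 0)) \<and>
     (\<forall>t\<in>{0..1}. integrable M (\<lambda>\<omega>. Z \<omega> t) \<and> integral\<^sup>L M (\<lambda>\<omega>. Z \<omega> t) = 1) \<and>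
     integrable M (\<lambda>\<omega>. SUP t\<in>{0..1}. Z \<omega> t)"

definition Dnorm :: "'a measure \<Rightarrow> ('a \<Rightarrow> real \<Rightarrow> real) \<Rightarrow> (real \<Rightarrow> real) \<Rightarrow> real" where
  "Dnorm M Z f = integral\<^sup>L M (\<lambda>\<omega>. SUP t\<in>{0..1}. \<bar>f t * Z \<omega> t\<bar>)"

text \<open>The underlying probability space is taken with sample space type real
  (every generator's law on C[0,1] can be realised on ([0,1], Lebesgue)).\<close>
definition is_Dnorm :: "((real \<Rightarrow> real) \<Rightarrow> real) \<Rightarrow> bool" where
  "is_Dnorm N \<longleftrightarrow> (\<exists>(M :: real measure) Z. generator M Z \<and> (\<forall>f\<in>E01. N f = Dnorm M Z f))"

definition spectral_densities :: "(real \<Rightarrow> real \<Rightarrow> real) \<Rightarrow> bool" where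
  "spectral_densities g \<longleftrightarrow>
     (\<forall>s\<in>{0..1}. \<forall>t\<in>{0..1}. g s t \<ge> 0) \<and>
     (\<forall>s\<in>{0..1}. continuous_on {0..1} (g s)) \<and>
     (\<forall>t\<in>{0..1}. integrable (lebesgue_on {0..1}) (\<lambda>s. g s t) \<and>
                 integral\<^sup>L (lebesgue_on {0..1}) (\<lambda>s. g s t) = 1) \<and>
     integrable (lebesgue_on {0..1}) (\<lambda>s. SUP t\<in>{0..1}. g s t)"

definition spectral_norm :: "(real \<Rightarrow> real \<Rightarrow> real) \<Rightarrow> (real \<Rightarrow> real) \<Rightarrow> real" where
  "spectral_norm g f = integral\<^sup>L (lebesgue_on {0..1}) (\<lambda>s. SUP t\<in>{0..1}. \<bar>f t\<bar> * g s t)"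

end

theory Submission
  imports Defs
begin

text \<open>A continuous non-negative path z on [0,1] is determined by the countably many
  bits "r_j < z(q_i)", where r_j runs through the non-negative rationals and q_i through
  the rationals of [0,1]. Writing these bits as base-4 digits in {0,1} gives a Borel map
  path_code from paths into the reals with a Borel left inverse path_decode: z(q) is
  recovered at rational q as a supremum over the r_j, and then on [0,1] by continuous
  extension. Hence a generator Z becomes the real random variable path_code \<circ> Z; by
  the quantile transform it has the same law as Q(U) for some Borel Q, with U uniform
  on [0,1], and g(s,t) = path_decode (Q s) t works, because marginals and weighted
  suprema of paths are Borel functions of the code. For f in E[0,1] the supremum over
  [0,1] is a countable one, which is what makes the weighted supremum Borel.
  Conversely, (g(U,t))_t is itself a generator.\<close>

definition quaternary_code :: "(nat \<Rightarrow> bool) \<Rightarrow> real" where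
  "quaternary_code c = (\<Sum>m. of_bool (c m) / 4 ^ Suc m)"

definition quaternary_digit_one :: "nat \<Rightarrow> real \<Rightarrow> bool" where
  "quaternary_digit_one n y \<longleftrightarrow> (\<exists>k::int. 4 * k + 1 \<le> 4 ^ Suc n * y \<and> 4 ^ Suc n * y < 4 * k + 2)"

lemma quaternary_digit_one_measurable [measurable]: "Measurable.pred borel (quaternary_digit_one n)"
  unfolding quaternary_digit_one_def by measurable

lemma summable_quaternary: "summable (\<lambda>m. of_bool (c m) / 4 ^ Suc m :: real)"
proof (rule summable_comparison_test')
  show "summable (\<lambda>m. (1/4::real) ^ m)" by (rule summable_geometric) simp
qed (simp add: power_one_over field_simps)

lemma quaternary_prefix_Ints: "4 ^ n * (\<Sum>m<n. of_bool (c m) / 4 ^ Suc m) \<in> (\<int> :: real set)"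
proof (induction n)
  case (Suc n)
  have "4 ^ Suc n * (\<Sum>m<Suc n. of_bool (c m) / 4 ^ Suc m)
      = 4 * (4 ^ n * (\<Sum>m<n. of_bool (c m) / 4 ^ Suc m)) + (of_bool (c n) :: real)"
    by (simp add: algebra_simps)
  moreover have "(of_bool (c n) :: real) \<in> \<int>" by simp
  ultimately show ?case using Suc by simp
qed simp

lemma quaternary_tail_le: "(\<Sum>i. of_bool (c (i + n)) / 4 ^ Suc (i + n) :: real) \<le> 1 / (3 * 4 ^ n)"
proof -
  have geom: "(\<lambda>i. (1/4::real) ^ Suc i) sums (1/3)"
    using sums_mult[OF geometric_sums[of "1/4::real"], of "1/4"] by simp
  have "(\<Sum>i. of_bool (c (i + n)) / 4 ^ Suc (i + n) :: real) \<le> (\<Sum>i. 1 / 4 ^ n * (1/4) ^ Suc i)"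
    by (intro suminf_le summable_ignore_initial_segment[OF summable_quaternary]
          summable_mult sums_summable[OF geom])
       (auto simp: power_add power_one_over mult_ac)
  also have "\<dots> = 1 / (3 * 4 ^ n)"
    using sums_unique[OF sums_mult[OF geom, of "1 / 4 ^ n"]] by simp
  finally show ?thesis .
qed

text \<open>As all digits are 0 or 1, the tail after digit n is at most a third of its unit
  and never carries into it.\<close>
lemma quaternary_digit_one_quaternary_code: "quaternary_digit_one n (quaternary_code c) \<longleftrightarrow> c n"
proof -
  let ?a = "\<lambda>m. of_bool (c m) / 4 ^ Suc m :: real"
  define T where "T = 4 ^ Suc n * (\<Sum>i. ?a (i + Suc n))"
  obtain K :: int where K: "4 ^ n * (\<Sum>m<n. ?a m) = of_int K"
    using quaternary_prefix_Ints[of n c] by (auto elim: Ints_cases)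
  have scaled: "4 ^ Suc n * quaternary_code c = 4 * of_int K + of_bool (c n) + T"
    using suminf_split_initial_segment[OF summable_quaternary, of c "Suc n"] K
    by (simp add: quaternary_code_def T_def algebra_simps)
  have T: "0 \<le> T" "T \<le> 1/3"
    unfolding T_def
    by (intro mult_nonneg_nonneg suminf_nonneg summable_ignore_initial_segment[OF summable_quaternary];
        simp)
       (use quaternary_tail_le[of c "Suc n"] in \<open>simp add: field_simps\<close>)
  show ?thesis
  proof
    assume "quaternary_digit_one n (quaternary_code c)"
    then obtain k :: int where k: "4 * of_int k + 1 \<le> 4 * of_int K + of_bool (c n) + T"
      "4 * of_int K + of_bool (c n) + T < 4 * of_int k + (2 :: real)"
      unfolding quaternary_digit_one_def scaled by blast
    show "c n"
    proof (rule ccontr)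
      assume "\<not> c n"
      with k T have "real_of_int k < of_int K" by simp
      then have "k + 1 \<le> K" by simp
      then have "real_of_int (k + 1) \<le> of_int K" by (simp only: of_int_le_iff)
      with k T \<open>\<not> c n\<close> show False by simp
    qed
  qed (use scaled T in \<open>auto simp: quaternary_digit_one_def intro!: exI[of _ K]\<close>)
qed

definition nonneg_rat :: "nat \<Rightarrow> real" where
  "nonneg_rat j = \<bar>from_nat_into \<rat> j\<bar>"

lemma nonneg_rat_dense:
  assumes "0 \<le> a" "a < b"
  obtains j where "a < nonneg_rat j" "nonneg_rat j < b"
proof -
  obtain q where q: "q \<in> \<rat>" "a < q" "q < b" using Rats_dense_in_real[OF \<open>a < b\<close>] by blast
  then obtain j where "from_nat_into \<rat> j = q" using from_nat_into_surj[OF countable_rat] by blast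
  with q assms show thesis by (intro that[of j]) (auto simp: nonneg_rat_def)
qed

lemma SUP_nonneg_rat_below:
  assumes "0 \<le> v"
  shows "(SUP j. if nonneg_rat j < v then nonneg_rat j else 0) = v"
proof (rule antisym)
  let ?F = "\<lambda>j. if nonneg_rat j < v then nonneg_rat j else 0"
  have bdd: "bdd_above (range ?F)" using assms by (intro bdd_aboveI[of _ v]) auto
  show "(SUP j. ?F j) \<le> v" using assms by (intro cSUP_least) auto
  show "v \<le> (SUP j. ?F j)"
  proof (rule dense_le)
    fix e assume "e < v"
    show "e \<le> (SUP j. ?F j)"
    proof (cases "e < 0")
      case True
      have "0 \<le> ?F 0" by (simp add: nonneg_rat_def)
      also have "\<dots> \<le> (SUP j. ?F j)" by (rule cSUP_upper[OF _ bdd]) simp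
      finally show ?thesis using True by simp
    next
      case False
      then obtain j where j: "e < nonneg_rat j" "nonneg_rat j < v"
        using nonneg_rat_dense[of e v] \<open>e < v\<close> by auto
      then have "e \<le> ?F j" by simp
      also have "\<dots> \<le> (SUP j. ?F j)" by (rule cSUP_upper[OF _ bdd]) simp
      finally show ?thesis .
    qed
  qed
qed

text \<open>Counterpart of the library lemma borel_measurable_cINF_real; as there, no boundedness
  hypothesis is needed, because unbounded families all get the same junk supremum.\<close>
lemma borel_measurable_cSUP_real [measurable (raw)]:
  fixes F :: "_ \<Rightarrow> _ \<Rightarrow> real"
  assumes [simp]: "countable I"
    and [measurable]: "\<And>i. i \<in> I \<Longrightarrow> F i \<in> borel_measurable M"
  shows "(\<lambda>x. SUP i\<in>I. F i x) \<in> borel_measurable M"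
proof -
  have "(SUP i\<in>I. F i x) = - (INF i\<in>I. - F i x)" for x
    by (simp add: Inf_real_def image_image)
  then show ?thesis by simp
qed

definition rats01 :: "real set" where
  "rats01 = \<rat> \<inter> {0..1}"

lemma countable_rats01 [simp]: "countable rats01"
  unfolding rats01_def by (intro countable_Int1 countable_rat)

lemma rats01_subset: "rats01 \<subseteq> {0..1}"
  unfolding rats01_def by auto

definition dyadic_floor :: "nat \<Rightarrow> real \<Rightarrow> real" where
  "dyadic_floor n t = \<lfloor>2 ^ n * t\<rfloor> / 2 ^ n"

lemma dyadic_floor_le: "dyadic_floor n t \<le> t"
proof -
  have "real_of_int \<lfloor>2 ^ n * t\<rfloor> \<le> 2 ^ n * t" by (rule of_int_floor_le)
  then show ?thesis unfolding dyadic_floor_def by (simp add: field_simps)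
qed

lemma dyadic_floor_ge: "t - 1 / 2 ^ n \<le> dyadic_floor n t"
proof -
  have "(2 ^ n * t - 1) / 2 ^ n \<le> real_of_int \<lfloor>2 ^ n * t\<rfloor> / 2 ^ n"
    by (rule divide_right_mono) (linarith, simp)
  then show ?thesis unfolding dyadic_floor_def by (simp add: diff_divide_distrib)
qed

lemma dyadic_floor_rats01:
  assumes "t \<in> {0..1}" shows "dyadic_floor n t \<in> rats01"
proof -
  have "0 \<le> dyadic_floor n t" using assms by (simp add: dyadic_floor_def)
  moreover have "dyadic_floor n t \<in> \<rat>" by (simp add: dyadic_floor_def)
  ultimately show ?thesis using assms dyadic_floor_le[of n t] by (auto simp: rats01_def)
qed

lemma dyadic_floor_tendsto: "(\<lambda>n. dyadic_floor n t) \<longlonglongrightarrow> t"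
proof (rule tendsto_sandwich[of "\<lambda>n. t - 1 / 2 ^ n" _ _ "\<lambda>n. t"])
  have "(\<lambda>n. t - (1/2::real) ^ n) \<longlonglongrightarrow> t - 0"
    by (intro tendsto_diff tendsto_const LIMSEQ_power_zero) simp
  then show "(\<lambda>n. t - 1 / 2 ^ n) \<longlonglongrightarrow> t" by (simp add: power_one_over)
qed (auto intro: always_eventually dyadic_floor_le dyadic_floor_ge)

lemma closure_rats01: "closure rats01 = {0..1}"
proof
  show "closure rats01 \<subseteq> {0..1}" using rats01_subset by (intro closure_minimal) auto
  show "{0..1} \<subseteq> closure rats01"
  proof
    fix t :: real assume "t \<in> {0..1}"
    then show "t \<in> closure rats01"
      unfolding closure_sequential
      by (intro exI[of _ "\<lambda>n. dyadic_floor n t"] conjI allI dyadic_floor_rats01 dyadic_floor_tendsto)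
  qed
qed

definition path_code :: "(real \<Rightarrow> real) \<Rightarrow> real" where
  "path_code z = quaternary_code
     (\<lambda>m. nonneg_rat (snd (prod_decode m)) < z (from_nat_into rats01 (fst (prod_decode m))))"

definition rat_value :: "real \<Rightarrow> real \<Rightarrow> real" where
  "rat_value y p =
     (SUP j. if quaternary_digit_one (prod_encode (to_nat_on rats01 p, j)) y then nonneg_rat j else 0)"

lemma rat_value_measurable [measurable]: "(\<lambda>y. rat_value y p) \<in> borel_measurable borel"
  unfolding rat_value_def by measurable

lemma rat_value_path_code:
  assumes "p \<in> rats01" "0 \<le> z p"
  shows "rat_value (path_code z) p = z p"
  using SUP_nonneg_rat_below[OF assms(2)] assms(1)
  by (simp add: rat_value_def path_code_def quaternary_digit_one_quaternary_code)

lemma uniformly_continuous_on_subset_eq: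
  fixes f g :: "'a::metric_space \<Rightarrow> 'b::metric_space"
  assumes "uniformly_continuous_on T f" "S \<subseteq> T" "\<And>x. x \<in> S \<Longrightarrow> g x = f x"
  shows "uniformly_continuous_on S g"
proof -
  have "\<exists>d>0. \<forall>x\<in>S. \<forall>x'\<in>S. dist x' x < d \<longrightarrow> dist (g x') (g x) < e" if e: "0 < e" for e
  proof -
    obtain d where "d > 0" "\<forall>x\<in>T. \<forall>x'\<in>T. dist x' x < d \<longrightarrow> dist (f x') (f x) < e"
      using assms(1) e unfolding uniformly_continuous_on_def by blast
    with assms(2,3) show ?thesis by (intro exI[of _ d]) auto
  qed
  then show ?thesis unfolding uniformly_continuous_on_def by blast
qed

text \<open>Uniform continuity of rat_value y on rats01 with discretised quantifiers, so that
  decodability is a Borel predicate.\<close>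
definition decodable :: "real \<Rightarrow> bool" where
  "decodable y \<longleftrightarrow> (\<forall>p\<in>rats01. 0 \<le> rat_value y p) \<and>
     (\<forall>m::nat. \<exists>k::nat. \<forall>p\<in>rats01. \<forall>p'\<in>rats01.
        \<bar>p - p'\<bar> < 1 / Suc k \<longrightarrow> \<bar>rat_value y p - rat_value y p'\<bar> < 1 / Suc m)"

lemma decodable_measurable [measurable]: "Measurable.pred borel decodable"
  unfolding decodable_def by measurable

lemma decodable_iff:
  "decodable y \<longleftrightarrow>
     (\<forall>p\<in>rats01. 0 \<le> rat_value y p) \<and> uniformly_continuous_on rats01 (rat_value y)"
proof -
  have "uniformly_continuous_on rats01 (rat_value y) \<longleftrightarrow>
     (\<forall>m::nat. \<exists>k::nat. \<forall>p\<in>rats01. \<forall>p'\<in>rats01.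
        \<bar>p - p'\<bar> < 1 / Suc k \<longrightarrow> \<bar>rat_value y p - rat_value y p'\<bar> < 1 / Suc m)"
    (is "_ \<longleftrightarrow> ?seq")
  proof
    assume uc: "uniformly_continuous_on rats01 (rat_value y)"
    show ?seq
    proof
      fix m :: nat
      obtain d where d: "d > 0" "\<forall>p\<in>rats01. \<forall>p'\<in>rats01. dist p p' < d \<longrightarrow>
          dist (rat_value y p) (rat_value y p') < 1 / Suc m"
        using uc unfolding uniformly_continuous_on_def by (metis of_nat_0_less_iff zero_less_Suc zero_less_divide_1_iff)
      obtain k where "inverse (real (Suc k)) < d" using reals_Archimedean d(1) by blast
      with d(2) show "\<exists>k::nat. \<forall>p\<in>rats01. \<forall>p'\<in>rats01.
          \<bar>p - p'\<bar> < 1 / Suc k \<longrightarrow> \<bar>rat_value y p - rat_value y p'\<bar> < 1 / Suc m"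
        by (intro exI[of _ k]) (auto simp: dist_real_def inverse_eq_divide)
    qed
  next
    assume seq: ?seq
    show "uniformly_continuous_on rats01 (rat_value y)"
      unfolding uniformly_continuous_on_def
    proof (intro allI impI)
      fix e :: real assume "0 < e"
      then obtain m where m: "inverse (real (Suc m)) < e" using reals_Archimedean by blast
      obtain k where k: "\<forall>p\<in>rats01. \<forall>p'\<in>rats01.
          \<bar>p - p'\<bar> < 1 / Suc k \<longrightarrow> \<bar>rat_value y p - rat_value y p'\<bar> < 1 / Suc m"
        using seq by blast
      show "\<exists>d>0. \<forall>p\<in>rats01. \<forall>p'\<in>rats01. dist p' p < d \<longrightarrow>
          dist (rat_value y p') (rat_value y p) < e"
      proof (intro exI[of _ "1 / Suc k"] conjI ballI impI)
        fix p p' assume "p \<in> rats01" "p' \<in> rats01" "dist p' p < 1 / Suc k"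
        with k have "\<bar>rat_value y p' - rat_value y p\<bar> < 1 / Suc m" by (simp add: dist_real_def)
        with m show "dist (rat_value y p') (rat_value y p) < e"
          by (simp add: dist_real_def inverse_eq_divide)
      qed simp
    qed
  qed
  then show ?thesis unfolding decodable_def by simp
qed

text \<open>The junk value 1 on non-decodable codes keeps every decoded path continuous and
  non-negative.\<close>
definition path_decode :: "real \<Rightarrow> real \<Rightarrow> real" where
  "path_decode y t = (if decodable y then lim (\<lambda>n. rat_value y (dyadic_floor n t)) else 1)"

lemma path_decode_measurable [measurable]: "(\<lambda>y. path_decode y t) \<in> borel_measurable borel"
  unfolding path_decode_def by measurable

lemma continuous_on_dyadic_floor_tendsto:
  assumes "continuous_on {0..1} h" "t \<in> {0..1}"
  shows "(\<lambda>n. h (dyadic_floor n t)) \<longlonglongrightarrow> h t"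
  by (intro continuous_on_tendsto_compose[OF assms(1) dyadic_floor_tendsto assms(2)]
      always_eventually allI)
     (use dyadic_floor_rats01[OF assms(2)] rats01_subset in blast)

lemma path_decode_eq:
  assumes "decodable y" "continuous_on {0..1} h" "\<forall>p\<in>rats01. rat_value y p = h p" "t \<in> {0..1}"
  shows "path_decode y t = h t"
proof -
  have "rat_value y (dyadic_floor n t) = h (dyadic_floor n t)" for n
    using assms(3) dyadic_floor_rats01[OF assms(4)] by blast
  then show ?thesis
    using continuous_on_dyadic_floor_tendsto[OF assms(2,4)] assms(1)
    by (simp add: path_decode_def limI)
qed

lemma decodable_extension:
  assumes "decodable y"
  obtains h where "continuous_on {0..1} h" "\<forall>p\<in>rats01. rat_value y p = h p"
    "\<forall>t\<in>{0..1}. 0 \<le> h t"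
proof -
  have nn: "\<forall>p\<in>rats01. 0 \<le> rat_value y p"
    and uc: "uniformly_continuous_on rats01 (rat_value y)"
    using assms by (simp_all add: decodable_iff)
  obtain h where h: "uniformly_continuous_on (closure rats01) h"
      "\<And>p. p \<in> rats01 \<Longrightarrow> rat_value y p = h p"
    using uniformly_continuous_on_extension_on_closure[OF uc] by metis
  have hc: "continuous_on {0..1} h"
    using uniformly_continuous_imp_continuous[OF h(1)] by (simp add: closure_rats01)
  have "0 \<le> h t" if "t \<in> {0..1}" for t
  proof (rule LIMSEQ_le_const[OF continuous_on_dyadic_floor_tendsto[OF hc that]])
    have "0 \<le> h (dyadic_floor n t)" for n
      using nn h(2) dyadic_floor_rats01[OF that] by metis
    then show "\<exists>N. \<forall>n\<ge>N. 0 \<le> h (dyadic_floor n t)" by blast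
  qed
  with hc h(2) show thesis by (intro that) auto
qed

lemma continuous_on_path_decode: "continuous_on {0..1} (path_decode y)"
proof (cases "decodable y")
  case True
  then obtain h where h: "continuous_on {0..1} h" "\<forall>p\<in>rats01. rat_value y p = h p"
    by (rule decodable_extension)
  have "h t = path_decode y t" if "t \<in> {0..1}" for t
    using path_decode_eq[OF True h that] by simp
  with h(1) show ?thesis by (rule continuous_on_eq)
qed (simp add: path_decode_def)

lemma path_decode_nonneg:
  assumes "t \<in> {0..1}" shows "0 \<le> path_decode y t"
proof (cases "decodable y")
  case True
  then obtain h where h: "continuous_on {0..1} h" "\<forall>p\<in>rats01. rat_value y p = h p"
    "\<forall>t\<in>{0..1}. 0 \<le> h t"
    by (rule decodable_extension)
  then show ?thesis using path_decode_eq[OF True h(1,2) assms] assms by simp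
qed (simp add: path_decode_def)

lemma path_decode_path_code:
  assumes "continuous_on {0..1} z" "\<forall>t\<in>{0..1}. 0 \<le> z t" "t \<in> {0..1}"
  shows "path_decode (path_code z) t = z t"
proof (rule path_decode_eq[OF _ assms(1) _ assms(3)])
  show rv: "\<forall>p\<in>rats01. rat_value (path_code z) p = z p"
    using assms(2) rats01_subset by (auto intro: rat_value_path_code)
  have "uniformly_continuous_on rats01 (rat_value (path_code z))"
    using rv
    by (intro uniformly_continuous_on_subset_eq[OF
          compact_uniformly_continuous[OF assms(1) compact_Icc] rats01_subset]) auto
  moreover have "\<forall>p\<in>rats01. 0 \<le> rat_value (path_code z) p"
    using rv assms(2) rats01_subset by auto
  ultimately show "decodable (path_code z)" by (simp add: decodable_iff)
qed

lemma continuous_within_le_SUP_rats01: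
  fixes \<phi> :: "real \<Rightarrow> real"
  assumes "continuous (at t within {0..1}) \<phi>" "t \<in> {0..1}" "rats01 \<subseteq> S" "bdd_above (\<phi> ` S)"
  shows "\<phi> t \<le> (SUP s\<in>S. \<phi> s)"
proof (rule tendsto_upperbound)
  show "(\<lambda>n. \<phi> (dyadic_floor n t)) \<longlonglongrightarrow> \<phi> t"
    by (rule continuous_within_tendsto_compose'[OF assms(1) _ dyadic_floor_tendsto])
       (use dyadic_floor_rats01[OF assms(2)] rats01_subset in blast)
  show "\<forall>\<^sub>F n in sequentially. \<phi> (dyadic_floor n t) \<le> (SUP s\<in>S. \<phi> s)"
    using dyadic_floor_rats01[OF assms(2)] assms(3,4)
    by (intro always_eventually allI cSUP_upper) auto
qed simp

definition discontinuities :: "(real \<Rightarrow> real) \<Rightarrow> real set" where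
  "discontinuities f = {t \<in> {0..1}. \<not> continuous (at t within {0..1}) f}"

lemma bdd_above_E01_mult:
  assumes "f \<in> E01" "continuous_on {0..1} h"
  shows "bdd_above ((\<lambda>t. \<bar>f t\<bar> * h t) ` {0..1})"
proof -
  obtain B where B: "\<And>t. t \<in> {0..1} \<Longrightarrow> \<bar>f t\<bar> \<le> B"
    using assms(1) unfolding E01_def bounded_real by (auto simp del: atLeastAtMost_iff)
  obtain C where C: "\<And>t. t \<in> {0..1} \<Longrightarrow> \<bar>h t\<bar> \<le> C"
    using compact_imp_bounded[OF compact_continuous_image[OF assms(2) compact_Icc]]
    unfolding bounded_real by (auto simp del: atLeastAtMost_iff)
  have "\<bar>f t\<bar> * h t \<le> B * C" if "t \<in> {0..1}" for t
  proof -
    have "\<bar>f t\<bar> * h t \<le> \<bar>f t\<bar> * \<bar>h t\<bar>" by (simp add: mult_left_mono)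
    also have "\<dots> \<le> B * C" using B[OF that] C[OF that] by (intro mult_mono) auto
    finally show ?thesis .
  qed
  then show ?thesis by (intro bdd_aboveI2)
qed

lemma SUP_E01_eq_SUP_countable:
  assumes f: "f \<in> E01" and h: "continuous_on {0..1} h"
  shows "(SUP t\<in>{0..1}. \<bar>f t\<bar> * h t) = (SUP t\<in>rats01 \<union> discontinuities f. \<bar>f t\<bar> * h t)"
proof (rule antisym)
  let ?S = "rats01 \<union> discontinuities f"
  have S: "rats01 \<subseteq> ?S" "?S \<subseteq> {0..1}" "?S \<noteq> {}"
    using rats01_subset by (auto simp: discontinuities_def rats01_def intro!: exI[of _ 0])
  have bdd: "bdd_above ((\<lambda>t. \<bar>f t\<bar> * h t) ` ?S)"
    using bdd_above_E01_mult[OF f h] S(2) by (rule bdd_above_mono[OF _ image_mono])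
  show "(SUP t\<in>?S. \<bar>f t\<bar> * h t) \<le> (SUP t\<in>{0..1}. \<bar>f t\<bar> * h t)"
    using S bdd_above_E01_mult[OF f h] by (intro cSUP_subset_mono) auto
  show "(SUP t\<in>{0..1}. \<bar>f t\<bar> * h t) \<le> (SUP t\<in>?S. \<bar>f t\<bar> * h t)"
  proof (rule cSUP_least)
    fix t :: real assume t: "t \<in> {0..1}"
    show "\<bar>f t\<bar> * h t \<le> (SUP t\<in>?S. \<bar>f t\<bar> * h t)"
    proof (cases "t \<in> discontinuities f")
      case True
      then show ?thesis by (intro cSUP_upper[OF _ bdd]) simp
    next
      case False
      then have "continuous (at t within {0..1}) f" using t by (simp add: discontinuities_def)
      moreover have "continuous (at t within {0..1}) h"
        using h t continuous_on_eq_continuous_within by blast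
      ultimately have "continuous (at t within {0..1}) (\<lambda>t. \<bar>f t\<bar> * h t)"
        by (intro continuous_intros)
      from continuous_within_le_SUP_rats01[OF this t S(1) bdd] show ?thesis .
    qed
  qed simp
qed

definition weighted_sup :: "(real \<Rightarrow> real) \<Rightarrow> real \<Rightarrow> real" where
  "weighted_sup f y = (SUP t\<in>{0..1}. \<bar>f t\<bar> * path_decode y t)"

lemma weighted_sup_measurable:
  assumes "f \<in> E01" shows "weighted_sup f \<in> borel_measurable borel"
proof -
  have "countable (rats01 \<union> discontinuities f)"
    using assms by (auto simp: E01_def discontinuities_def intro: countable_finite)
  then have "(\<lambda>y. SUP t\<in>rats01 \<union> discontinuities f. \<bar>f t\<bar> * path_decode y t) \<in> borel_measurable borel"
    by measurable
  then show ?thesis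
    unfolding weighted_sup_def SUP_E01_eq_SUP_countable[OF assms continuous_on_path_decode] .
qed

lemma prob_space_lebesgue_on_unit: "prob_space (lebesgue_on {0..1::real})"
proof (rule prob_spaceI)
  have "emeasure (lebesgue_on {0..1::real}) {0..1} = emeasure (completion lborel) {0..1::real}"
    by (rule emeasure_restrict_space) auto
  then show "emeasure (lebesgue_on {0..1::real}) (space (lebesgue_on {0..1})) = 1" by simp
qed

lemma distr_lebesgue_on_unit_extend:
  fixes I :: "real \<Rightarrow> real"
  assumes I: "I \<in> borel_measurable (restrict_space borel {0<..<1})"
  defines "Q \<equiv> \<lambda>s. if s \<in> {0<..<1} then I s else 0"
  shows "Q \<in> borel_measurable (lebesgue_on {0..1})"
    and "distr (lebesgue_on {0..1}) borel Q = distr (restrict_space lborel {0<..<1}) borel I"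
proof -
  have "{x::real. 0 < x \<and> x < 1} = {0<..<1}" by auto
  then have Qb: "Q \<in> borel_measurable borel"
    unfolding Q_def by (subst measurable_If_restrict_space_iff) (auto intro: I)
  then show Ql: "Q \<in> borel_measurable (lebesgue_on {0..1})"
    by (intro measurable_restrict_space1 measurable_completion) simp
  have Il: "I \<in> borel_measurable (restrict_space lborel {0<..<1})"
    using I by (simp add: measurable_def space_restrict_space sets_restrict_space)
  show "distr (lebesgue_on {0..1}) borel Q = distr (restrict_space lborel {0<..<1}) borel I"
  proof (rule measure_eqI)
    fix A assume "A \<in> sets (distr (lebesgue_on {0..1}) borel Q)"
    then have A: "A \<in> sets borel" by simp
    have B: "Q -` A \<inter> {0..1} \<in> sets borel" "Q -` A \<inter> {0<..<1} \<in> sets borel"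
      using Qb A by (auto intro: measurable_sets)
    have "AE x in lborel. x \<notin> {0, 1::real}"
      by (rule AE_not_in) (simp add: finite_imp_null_set_lborel)
    then have "AE x in lborel. x \<in> Q -` A \<inter> {0..1} \<longleftrightarrow> x \<in> Q -` A \<inter> {0<..<1}"
      by eventually_elim auto
    then have "emeasure lborel (Q -` A \<inter> {0..1}) = emeasure lborel (Q -` A \<inter> {0<..<1})"
      using B by (intro emeasure_eq_AE) auto
    moreover have "I -` A \<inter> {0<..<1} = Q -` A \<inter> {0<..<1}" by (auto simp: Q_def)
    ultimately show "emeasure (distr (lebesgue_on {0..1}) borel Q) A =
        emeasure (distr (restrict_space lborel {0<..<1}) borel I) A"
      using B by (simp add: emeasure_distr[OF Ql A] emeasure_distr[OF Il A]
          emeasure_restrict_space space_restrict_space Int_commute)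
  qed simp
qed

lemma uniform_representation:
  fixes X :: "'a \<Rightarrow> real"
  assumes "prob_space M" "X \<in> borel_measurable M"
  obtains Q where "Q \<in> borel_measurable (lebesgue_on {0..1::real})"
    "distr (lebesgue_on {0..1}) borel Q = distr M borel X"
proof -
  have "real_distribution (distr M borel X)"
    by (intro real_distribution.intro real_distribution_axioms.intro
        prob_space.prob_space_distr[OF assms]) simp
  then have X: "cdf_distribution (distr M borel X)" by (simp add: cdf_distribution_def)
  note Q = distr_lebesgue_on_unit_extend[OF cdf_distribution.measurable_CI[OF X]]
  show thesis
    by (rule that[OF Q(1)]) (simp only: Q(2) cdf_distribution.distr_I_eq_M[OF X])
qed

lemma integral_comp_distr_eq:
  fixes K :: "_ \<Rightarrow> 'b::{banach, second_countable_topology}"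
  assumes "X \<in> M \<rightarrow>\<^sub>M S" "Y \<in> N \<rightarrow>\<^sub>M S" "distr M S X = distr N S Y"
    and K: "K \<in> borel_measurable S"
  shows "integral\<^sup>L M (\<lambda>x. K (X x)) = integral\<^sup>L N (\<lambda>y. K (Y y))"
  using integral_distr[OF assms(1) K] integral_distr[OF assms(2) K] assms(3) by simp

lemma integrable_comp_distr_eq:
  fixes K :: "_ \<Rightarrow> 'b::{banach, second_countable_topology}"
  assumes "X \<in> M \<rightarrow>\<^sub>M S" "Y \<in> N \<rightarrow>\<^sub>M S" "distr M S X = distr N S Y"
    and K: "K \<in> borel_measurable S"
  shows "integrable M (\<lambda>x. K (X x)) \<longleftrightarrow> integrable N (\<lambda>y. K (Y y))"
  using integrable_distr_eq[OF assms(1) K] integrable_distr_eq[OF assms(2) K] assms(3) by simp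

lemma generator_spectral_densities:
  assumes "spectral_densities g"
  shows "generator (lebesgue_on {0..1}) g"
  using assms prob_space_lebesgue_on_unit
  unfolding spectral_densities_def generator_def
  by (auto intro: borel_measurable_integrable)

lemma Dnorm_spectral_densities:
  assumes "spectral_densities g"
  shows "Dnorm (lebesgue_on {0..1}) g f = spectral_norm g f"
  unfolding spectral_norm_def Dnorm_def
proof (rule Bochner_Integration.integral_cong[OF refl])
  fix s assume "s \<in> space (lebesgue_on {0..1::real})"
  with assms show "(SUP t\<in>{0..1}. \<bar>f t * g s t\<bar>) = (SUP t\<in>{0..1}. \<bar>f t\<bar> * g s t)"
    unfolding spectral_densities_def by (intro SUP_cong) (auto simp: abs_mult)
qed

lemma is_Dnorm_spectral_norm:
  assumes "spectral_densities g"
  shows "is_Dnorm (spectral_norm g)"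
  using generator_spectral_densities[OF assms] Dnorm_spectral_densities[OF assms]
  unfolding is_Dnorm_def by metis

lemma path_code_measurable:
  assumes "\<forall>t\<in>{0..1}. (\<lambda>\<omega>. Z \<omega> t) \<in> borel_measurable M"
  shows "(\<lambda>\<omega>. path_code (Z \<omega>)) \<in> borel_measurable M"
proof -
  have "rats01 \<noteq> {}" by (auto simp: rats01_def intro!: exI[of _ 0])
  then have [measurable]: "(\<lambda>\<omega>. Z \<omega> (from_nat_into rats01 i)) \<in> borel_measurable M" for i
    using assms from_nat_into[of rats01 i] rats01_subset by auto
  show ?thesis
    unfolding path_code_def quaternary_code_def by measurable
qed

lemma weighted_sup_path_code:
  assumes "continuous_on {0..1} z" "\<forall>t\<in>{0..1}. 0 \<le> z t"
  shows "weighted_sup f (path_code z) = (SUP t\<in>{0..1}. \<bar>f t * z t\<bar>)"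
  unfolding weighted_sup_def using assms path_decode_path_code[OF assms]
  by (intro SUP_cong) (auto simp: abs_mult)

context
  fixes M :: "'a measure" and Z :: "'a \<Rightarrow> real \<Rightarrow> real" and Q :: "real \<Rightarrow> real"
  assumes generator: "generator M Z"
    and Q_measurable: "Q \<in> borel_measurable (lebesgue_on {0..1})"
    and distr_Q: "distr (lebesgue_on {0..1}) borel Q = distr M borel (\<lambda>\<omega>. path_code (Z \<omega>))"
begin

lemma generator_path:
  assumes "\<omega> \<in> space M"
  shows "continuous_on {0..1} (Z \<omega>)" "\<forall>t\<in>{0..1}. 0 \<le> Z \<omega> t"
  using generator assms unfolding generator_def by auto

lemma integral_path_code_eq:
  fixes K :: "real \<Rightarrow> 'b::{banach, second_countable_topology}"
  assumes "K \<in> borel_measurable borel"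
  shows "integral\<^sup>L M (\<lambda>\<omega>. K (path_code (Z \<omega>))) = integral\<^sup>L (lebesgue_on {0..1}) (\<lambda>s. K (Q s))"
    and "integrable M (\<lambda>\<omega>. K (path_code (Z \<omega>))) \<longleftrightarrow> integrable (lebesgue_on {0..1}) (\<lambda>s. K (Q s))"
proof -
  have X: "(\<lambda>\<omega>. path_code (Z \<omega>)) \<in> borel_measurable M"
    using generator by (intro path_code_measurable) (simp add: generator_def)
  show "integral\<^sup>L M (\<lambda>\<omega>. K (path_code (Z \<omega>))) = integral\<^sup>L (lebesgue_on {0..1}) (\<lambda>s. K (Q s))"
    using integral_comp_distr_eq[OF Q_measurable X distr_Q assms] by simp
  show "integrable M (\<lambda>\<omega>. K (path_code (Z \<omega>))) \<longleftrightarrow> integrable (lebesgue_on {0..1}) (\<lambda>s. K (Q s))"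
    using integrable_comp_distr_eq[OF Q_measurable X distr_Q assms] by simp
qed

lemma spectral_densities_path_decode:
  "spectral_densities (\<lambda>s. path_decode (Q s))"
proof -
  have "integrable (lebesgue_on {0..1}) (\<lambda>s. path_decode (Q s) t) \<and>
      integral\<^sup>L (lebesgue_on {0..1}) (\<lambda>s. path_decode (Q s) t) = 1" if t: "t \<in> {0..1}" for t
  proof -
    have Zi: "integrable M (\<lambda>\<omega>. Z \<omega> t)" "integral\<^sup>L M (\<lambda>\<omega>. Z \<omega> t) = 1"
      using generator t unfolding generator_def by auto
    have decode: "path_decode (path_code (Z \<omega>)) t = Z \<omega> t" if "\<omega> \<in> space M" for \<omega>
      using path_decode_path_code[OF generator_path[OF that] t] .
    show ?thesis
      using Zi integral_path_code_eq[of "\<lambda>y. path_decode y t"]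
      by (simp add: decode cong: Bochner_Integration.integral_cong Bochner_Integration.integrable_cong)
  qed
  moreover have "integrable (lebesgue_on {0..1}) (\<lambda>s. SUP t\<in>{0..1}. path_decode (Q s) t)"
  proof -
    have sup: "weighted_sup (\<lambda>_. 1) (path_code (Z \<omega>)) = (SUP t\<in>{0..1}. Z \<omega> t)"
      if "\<omega> \<in> space M" for \<omega>
      unfolding weighted_sup_path_code[OF generator_path[OF that]]
      using generator_path(2)[OF that] by (intro SUP_cong) auto
    have "integrable M (\<lambda>\<omega>. weighted_sup (\<lambda>_. 1) (path_code (Z \<omega>)))"
      using generator unfolding generator_def
      by (subst Bochner_Integration.integrable_cong[OF refl sup]) auto
    moreover have one: "(\<lambda>_. 1) \<in> E01" by (auto simp: E01_def bounded_def)
    ultimately show ?thesis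
      using integral_path_code_eq(2)[OF weighted_sup_measurable[OF one]]
      by (simp add: weighted_sup_def)
  qed
  ultimately show ?thesis
    unfolding spectral_densities_def using path_decode_nonneg continuous_on_path_decode by blast
qed

lemma Dnorm_eq_spectral_norm_path_decode:
  assumes "f \<in> E01"
  shows "Dnorm M Z f = spectral_norm (\<lambda>s. path_decode (Q s)) f"
proof -
  have "Dnorm M Z f = integral\<^sup>L M (\<lambda>\<omega>. weighted_sup f (path_code (Z \<omega>)))"
    unfolding Dnorm_def
    by (intro Bochner_Integration.integral_cong refl weighted_sup_path_code[symmetric] generator_path)
  also have "\<dots> = integral\<^sup>L (lebesgue_on {0..1}) (\<lambda>s. weighted_sup f (Q s))"
    by (rule integral_path_code_eq(1)[OF weighted_sup_measurable[OF assms]])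
  also have "\<dots> = spectral_norm (\<lambda>s. path_decode (Q s)) f"
    by (simp add: spectral_norm_def weighted_sup_def)
  finally show ?thesis .
qed

end

lemma spectral_representation:
  assumes "generator M Z"
  obtains g where "spectral_densities g" "\<forall>f\<in>E01. Dnorm M Z f = spectral_norm g f"
proof -
  have "prob_space M" "(\<lambda>\<omega>. path_code (Z \<omega>)) \<in> borel_measurable M"
    using assms by (auto intro: path_code_measurable simp: generator_def)
  then obtain Q where Q: "Q \<in> borel_measurable (lebesgue_on {0..1::real})"
    "distr (lebesgue_on {0..1}) borel Q = distr M borel (\<lambda>\<omega>. path_code (Z \<omega>))"
    by (rule uniform_representation)
  show thesis
    using spectral_densities_path_decode[OF assms Q] Dnorm_eq_spectral_norm_path_decode[OF assms Q]
    by (intro that) auto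
qed

theorem proposition3p3:
  shows "(\<forall>(M :: 'a measure) Z. generator M Z \<longrightarrow>
            (\<exists>g. spectral_densities g \<and>
                 (\<forall>f\<in>E01. Dnorm M Z f = spectral_norm g f) \<and>
                 generator (lebesgue_on {0..1}) (\<lambda>s t. g s t) \<and>
                 (\<forall>f\<in>E01. Dnorm M Z f = Dnorm (lebesgue_on {0..1}) (\<lambda>s t. g s t) f)))
       \<and> (\<forall>g. spectral_densities g \<longrightarrow> is_Dnorm (spectral_norm g))"
proof (intro conjI allI impI)
  fix M :: "'a measure" and Z assume "generator M Z"
  then obtain g where "spectral_densities g" "\<forall>f\<in>E01. Dnorm M Z f = spectral_norm g f"
    by (rule spectral_representation)
  with generator_spectral_densities Dnorm_spectral_densities
  show "\<exists>g. spectral_densities g \<and>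
      (\<forall>f\<in>E01. Dnorm M Z f = spectral_norm g f) \<and>
      generator (lebesgue_on {0..1}) (\<lambda>s t. g s t) \<and>
      (\<forall>f\<in>E01. Dnorm M Z f = Dnorm (lebesgue_on {0..1}) (\<lambda>s t. g s t) f)"
    by metis
qed (rule is_Dnorm_spectral_norm)

end
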